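(* Let $p_1<p_2<\cdots$ be the rational primes. For each $N$, let $\{Z_i^k: i\ge1,\ 1\le k\le N\}$ be independent Bernoulli random variables with $\mathbb{P}[Z_i^k=1]=1/p_i$, and define \[ \Delta'_N:=\max_{1\le k<j\le N}\ \max_i\ Z_i^jZ_i^k\log p_i . \] Fix $\delta\in(0,\infty)$ and let $\varphi_N=\varphi_N[\delta]$ be defined as below. Then \[ \liminf_{N\to\infty}\mathbb{P}\big[\Delta'_N\ge\log\varphi_N[\delta]\big]\ge 1-e^{-\delta}. \]
   Context: For $\delta\in(0,\infty)$ and $N\ge1$, $\varphi_N=\varphi_N[\delta]>1$ is the unique real number satisfying $\int_{\varphi_N}^{2\varphi_N}\frac{N^2\,dx}{2x^2\log x}=\delta$. *)

theory Defs
  imports "HOL-Probability.Probability" "HOL-Computational_Algebra.Primes"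
begin

text \<open>The i-th rational prime, 1-based: p 1 = 2, p 2 = 3, ...\<close>
definition pr :: "nat \<Rightarrow> nat" where
  "pr i = enumerate {p::nat. prime p} (i - 1)"

definition phiN :: "real \<Rightarrow> nat \<Rightarrow> real" where
  "phiN \<delta> N = (THE \<phi>. \<phi> > 1 \<and>
      integral {\<phi>..2*\<phi>} (\<lambda>x. (real N)^2 / (2 * x^2 * ln x)) = \<delta>)"

definition DeltaN' :: "nat \<Rightarrow> (nat \<Rightarrow> nat \<Rightarrow> 'a \<Rightarrow> real) \<Rightarrow> 'a \<Rightarrow> ereal" where
  "DeltaN' N Z \<omega> = (SUP (k, j, i) \<in> {(k, j, i). 1 \<le> k \<and> k < j \<and> j \<le> N \<and> 1 \<le> i}.
      ereal (Z i j \<omega> * Z i k \<omega> * ln (real (pr i))))"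

end

theory Submission
  imports Defs "HOL-Number_Theory.Prime_Powers" "HOL-Real_Asymp.Real_Asymp"
begin

(* Let F_i be the event that two columns k < j of row i satisfy Z_i^k = Z_i^j = 1.  If
   p_i >= phi_N then F_i forces Delta'_N >= log phi_N.  The events F_i are independent
   (they depend on disjoint blocks of the array), and counting the configurations with
   exactly two ones gives P[F_i] >= binom(N,2) p_i^-2 (1 - 1/p_i)^(N-2).  Hence
   P[Delta'_N >= log phi_N] >= 1 - exp(-sum_i P[F_i]) for every finite set of such rows. *)

section \<open>Chebyshev's estimates\<close>

definition lnfact :: "nat \<Rightarrow> real" where
  "lnfact m = (\<Sum>k=1..m. ln (real k))"

definition cheb_psi :: "nat \<Rightarrow> real" where
  "cheb_psi n = (\<Sum>d=1..n. mangoldt d)"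

definition cheb_theta :: "nat \<Rightarrow> real" where
  "cheb_theta n = (\<Sum>k=1..n. if prime k then ln (real k) else 0)"

lemma ln_Suc_diff_bounds:
  assumes "m \<ge> 1"
  shows "1 / (real m + 1) \<le> ln (real m + 1) - ln (real m)"
    and "ln (real m + 1) - ln (real m) \<le> 1 / real m"
proof -
  have "ln (1 + (- 1/(real m + 1))) \<le> - 1 / (real m + 1)"
    by (rule ln_add_one_self_le_self2) (use assms in \<open>simp add: field_simps\<close>)
  moreover have "1 + (- 1/(real m + 1)) = real m / (real m + 1)"
    using assms by (simp add: field_simps)
  ultimately show "1 / (real m + 1) \<le> ln (real m + 1) - ln (real m)"
    using assms by (simp add: ln_div)
  have "ln (1 + 1/real m) \<le> 1 / real m" by (rule ln_add_one_self_le_self) simp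
  moreover have "1 + 1/real m = (real m + 1)/real m" using assms by (simp add: field_simps)
  ultimately show "ln (real m + 1) - ln (real m) \<le> 1 / real m"
    using assms by (simp add: ln_div)
qed

lemma lnfact_bounds:
  assumes "m \<ge> 1"
  shows "real m * ln (real m) - real m + 1 \<le> lnfact m
       \<and> lnfact m \<le> real m * ln (real m) - real m + 1 + ln (real m)"
  using assms
proof (induction m rule: dec_induct)
  case base
  then show ?case by (simp add: lnfact_def)
next
  case (step m)
  have m: "real m \<ge> 1" using step by simp
  have "real m * (ln (real m + 1) - ln (real m)) \<le> 1"
    using mult_left_mono[OF ln_Suc_diff_bounds(2)[OF step(1)], of "real m"] m by simp
  moreover have "1 \<le> (real m + 1) * (ln (real m + 1) - ln (real m))"
    using mult_left_mono[OF ln_Suc_diff_bounds(1)[OF step(1)], of "real m + 1"] m by simp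
  ultimately show ?case using step.IH by (simp add: lnfact_def algebra_simps)
qed

text \<open>Legendre's identity log m! = sum_d Lambda(d) floor(m/d); the range of d may be
  extended beyond m because the extra terms vanish.\<close>

lemma lnfact_mangoldt:
  assumes "m \<le> n"
  shows "lnfact m = (\<Sum>d=1..n. mangoldt d * real (m div d))"
proof -
  have legendre: "lnfact m = (\<Sum>d=1..m. mangoldt d * real (m div d))" for m
  proof (induction m)
    case 0 then show ?case by (simp add: lnfact_def)
  next
    case (Suc m)
    have divisors: "{d. d dvd Suc m} = {d\<in>{1..Suc m}. d dvd Suc m}"
      by (auto dest: dvd_imp_le simp: Suc_le_eq intro: dvd_pos_nat[of "Suc m"])
    have "(\<Sum>d=1..Suc m. mangoldt d * real (Suc m div d)) =
          (\<Sum>d=1..Suc m. mangoldt d * real (m div d) + (if d dvd Suc m then mangoldt d else 0))"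
      by (intro sum.cong refl) (auto simp: div_Suc dvd_eq_mod_eq_0 algebra_simps)
    also have "\<dots> = (\<Sum>d=1..m. mangoldt d * real (m div d))
                   + (\<Sum>d=1..Suc m. (if d dvd Suc m then mangoldt d else 0))"
      by (simp add: sum.distrib)
    also have "(\<Sum>d=1..Suc m. (if d dvd Suc m then mangoldt d else 0)) = (\<Sum>d | d dvd Suc m. mangoldt d)"
      unfolding divisors by (rule sum.inter_filter[symmetric]) simp
    also have "\<dots> = ln (real (Suc m))" using mangoldt_sum[of "Suc m", where 'a=real] by simp
    finally show ?case using Suc by (simp add: lnfact_def)
  qed
  have "(\<Sum>d=1..n. mangoldt d * real (m div d)) = (\<Sum>d=1..m. mangoldt d * real (m div d))"
    using assms by (intro sum.mono_neutral_right) auto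
  thus ?thesis by (simp add: legendre)
qed

definition cheb_weight :: "nat \<Rightarrow> int" where
  "cheb_weight m = int m - int (m div 2) - int (m div 3) - int (m div 5) + int (m div 30)"

lemma cheb_weight_periodic: "cheb_weight (30*u + v) = cheb_weight v"
proof -
  have "(30*u+v) div 2 = 15*u + v div 2" "(30*u+v) div 3 = 10*u + v div 3"
       "(30*u+v) div 5 = 6*u + v div 5" "(30*u+v) div 30 = u + v div 30" by simp_all
  thus ?thesis unfolding cheb_weight_def by simp
qed

lemma cheb_weight_01: "cheb_weight m \<in> {0,1}"
proof -
  have table: "\<forall>v\<in>set [0..<30]. cheb_weight v \<in> {0,1}"
    unfolding cheb_weight_def by code_simp
  have "cheb_weight m = cheb_weight (m mod 30)"
    by (metis cheb_weight_periodic div_mult_mod_eq mult.commute)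
  thus ?thesis using table by simp
qed

lemma cheb_weight_one:
  assumes "1 \<le> m" "m \<le> 5"
  shows "cheb_weight m = 1"
proof -
  have "\<forall>v\<in>set [1..<6]. cheb_weight v = 1" unfolding cheb_weight_def by code_simp
  thus ?thesis using assms by simp
qed

definition cheb_comb :: "nat \<Rightarrow> real" where
  "cheb_comb q = lnfact (30*q) - lnfact (15*q) - lnfact (10*q) - lnfact (6*q) + lnfact q"

lemma cheb_comb_mangoldt:
  "cheb_comb q = (\<Sum>d=1..30*q. mangoldt d * real_of_int (cheb_weight (30*q div d)))"
proof -
  have nested_div: "(k*c*q) div d div k = (c*q) div d" if "(k::nat) > 0" for k c d
    using that by (simp add: div_mult2_eq[symmetric] mult.commute mult.left_commute)
  have "\<And>d. 30*q div d div 2 = 15*q div d" "\<And>d. 30*q div d div 3 = 10*q div d"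
       "\<And>d. 30*q div d div 5 = 6*q div d" "\<And>d. 30*q div d div 30 = q div d"
    using nested_div[of 2 15] nested_div[of 3 10] nested_div[of 5 6] nested_div[of 30 1]
    by simp_all
  moreover have "cheb_comb q = (\<Sum>d=1..30*q. mangoldt d * (real (30*q div d)
      - real (15*q div d) - real (10*q div d) - real (6*q div d) + real (q div d)))"
    unfolding cheb_comb_def
    by (subst (1 2 3 4 5) lnfact_mangoldt[where n="30*q"])
       (auto simp: sum_subtractf sum.distrib algebra_simps)
  ultimately show ?thesis by (simp add: cheb_weight_def)
qed

text \<open>Since the weights lie in {0,1} and equal 1 for d > 5q:
  psi(30q) - psi(5q) <= cheb_comb q <= psi(30q).\<close>

lemma cheb_comb_le_psi: "cheb_comb q \<le> cheb_psi (30*q)"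
  unfolding cheb_comb_mangoldt cheb_psi_def
proof (rule sum_mono)
  fix d
  have "real_of_int (cheb_weight (30*q div d)) \<le> 1" using cheb_weight_01[of "30*q div d"] by auto
  thus "mangoldt d * real_of_int (cheb_weight (30*q div d)) \<le> mangoldt d"
    using mangoldt_nonneg[of d] by (simp add: mult_left_le)
qed

lemma psi_diff_le_cheb_comb: "cheb_psi (30*q) - cheb_psi (5*q) \<le> cheb_comb q"
proof -
  have split: "{1..30*q} = {1..5*q} \<union> {5*q+1..30*q}" by auto
  have "cheb_psi (30*q) - cheb_psi (5*q) = (\<Sum>d\<in>{5*q+1..30*q}. mangoldt d)"
    unfolding cheb_psi_def split by (subst sum.union_disjoint) auto
  also have "\<dots> = (\<Sum>d\<in>{5*q+1..30*q}. mangoldt d * real_of_int (cheb_weight (30*q div d)))"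
  proof (intro sum.cong refl)
    fix d assume d: "d \<in> {5*q+1..30*q}"
    have "1 \<le> 30*q div d" using d by (simp add: div_greater_zero_iff Suc_le_eq)
    moreover have "30*q div d < 6" using d by (simp add: div_less_iff_less_mult)
    ultimately show "mangoldt d = mangoldt d * real_of_int (cheb_weight (30*q div d))"
      by (simp add: cheb_weight_one)
  qed
  also have "\<dots> \<le> (\<Sum>d=1..30*q. mangoldt d * real_of_int (cheb_weight (30*q div d)))"
  proof (intro sum_mono2)
    fix d
    have "0 \<le> cheb_weight (30*q div d)" using cheb_weight_01[of "30*q div d"] by auto
    thus "0 \<le> mangoldt d * real_of_int (cheb_weight (30*q div d))" by (simp add: mangoldt_nonneg)
  qed auto
  finally show ?thesis by (simp add: cheb_comb_mangoldt)
qed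

text \<open>Pade-type bounds 2(x-1)/(x+1) <= ln x <= (x - 1/x)/2 for x >= 1, used to evaluate
  Chebyshev's constant to three decimals.\<close>

lemma ln_ge_pade: assumes "(x::real) \<ge> 1" shows "2*(x-1)/(x+1) \<le> ln x"
proof -
  let ?g = "\<lambda>x::real. ln x - 2*(x-1)/(x+1)"
  have "?g 1 \<le> ?g x"
  proof (rule DERIV_nonneg_imp_nondecreasing[OF assms])
    fix y :: real assume y: "1 \<le> y" "y \<le> x"
    have "DERIV ?g y :> (1/y - 4/(y+1)^2)"
      using y by (auto intro!: derivative_eq_intros simp: field_simps power2_eq_square)
    moreover have "1/y - 4/(y+1)^2 = (y-1)^2/(y*(y+1)^2)"
      using y by (simp add: divide_simps) (simp add: power2_eq_square algebra_simps)
    ultimately show "\<exists>d. DERIV ?g y :> d \<and> 0 \<le> d" using y by auto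
  qed
  thus ?thesis by simp
qed

lemma ln_le_pade: assumes "(x::real) \<ge> 1" shows "ln x \<le> (x - 1/x)/2"
proof -
  let ?g = "\<lambda>x::real. (x - 1/x)/2 - ln x"
  have "?g 1 \<le> ?g x"
  proof (rule DERIV_nonneg_imp_nondecreasing[OF assms])
    fix y :: real assume y: "1 \<le> y" "y \<le> x"
    have "DERIV ?g y :> ((1 + 1/y^2)/2 - 1/y)"
      using y by (auto intro!: derivative_eq_intros simp: field_simps power2_eq_square)
    moreover have "(1 + 1/y^2)/2 - 1/y = (y-1)^2/(2*y^2)"
      using y by (simp add: field_simps power2_eq_square; algebra)
    ultimately show "\<exists>d. DERIV ?g y :> d \<and> 0 \<le> d" using y by auto
  qed
  thus ?thesis by simp
qed

text \<open>Chebyshev's constant: cheb_comb q is approximately 30 cheb_const q.\<close>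

definition cheb_const :: real where
  "cheb_const = (14 * ln 2 + 9 * ln 3 + 5 * ln 5) / 30"

lemma cheb_const_bounds: "0.921 \<le> cheb_const \<and> cheb_const \<le> 0.9218"
proof -
  define a where "a = ln (16/15::real)"
  define b where "b = ln (25/24::real)"
  define c where "c = ln (81/80::real)"
  have l16: "ln (16::real) = 4 * ln 2" using ln_realpow[of 2 4] by simp
  have l8: "ln (8::real) = 3 * ln 2" using ln_realpow[of 2 3] by simp
  have "a = 4*ln 2 - ln 3 - ln 5"
    using ln_mult[of 3 5] l16 unfolding a_def by (simp add: ln_div)
  moreover have "b = 2*ln 5 - 3*ln 2 - ln 3"
    using ln_realpow[of 5 2] ln_mult[of 8 3] l8 unfolding b_def by (simp add: ln_div)
  moreover have "c = 4*ln 3 - 4*ln 2 - ln 5"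
    using ln_realpow[of 3 4] ln_mult[of 16 5] l16 unfolding c_def by (simp add: ln_div)
  ultimately have e: "30 * cheb_const = 277*a + 202*b + 122*c"
    unfolding cheb_const_def by (simp add: algebra_simps)
  have "2*(16/15-1)/(16/15+1) \<le> a" "a \<le> (16/15 - 1/(16/15))/2"
    unfolding a_def by (rule ln_ge_pade ln_le_pade; simp)+
  moreover have "2*(25/24-1)/(25/24+1) \<le> b" "b \<le> (25/24 - 1/(25/24))/2"
    unfolding b_def by (rule ln_ge_pade ln_le_pade; simp)+
  moreover have "2*(81/80-1)/(81/80+1) \<le> c" "c \<le> (81/80 - 1/(81/80))/2"
    unfolding c_def by (rule ln_ge_pade ln_le_pade; simp)+
  ultimately show ?thesis using e by simp
qed

text \<open>Stirling's bounds turn cheb_comb q into 30 cheb_const q up to logarithmic error.\<close>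

lemma cheb_comb_bounds:
  assumes q: "q \<ge> 1"
  shows "30*cheb_const*real q - 3*ln (30*real q) - 1 \<le> cheb_comb q
       \<and> cheb_comb q \<le> 30*cheb_const*real q + 2*ln (30*real q)"
proof -
  define L where "L = ln (real q)"
  define x where "x = real q"
  have x1: "x \<ge> 1" using q unfolding x_def by simp
  have e30: "ln (30::real) = ln 2 + ln 3 + ln 5" using ln_mult[of "2*3" 5] ln_mult[of 2 3] by simp
  have e15: "ln (15::real) = ln 3 + ln 5" using ln_mult[of 3 5] by simp
  have e10: "ln (10::real) = ln 2 + ln 5" using ln_mult[of 2 5] by simp
  have e6: "ln (6::real) = ln 2 + ln 3" using ln_mult[of 2 3] by simp
  have m: "\<And>k::real. k \<ge> 1 \<Longrightarrow> ln (k*x) = ln k + L"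
    using x1 unfolding L_def x_def by (simp add: ln_mult)
  define F where "F = (\<lambda>k::real. k*x*(ln k + L) - k*x)"
  have S: "F (real c) + 1 \<le> lnfact (c*q) \<and> lnfact (c*q) \<le> F (real c) + 1 + (ln (real c) + L)"
    if "c \<ge> 1" for c
    using lnfact_bounds[of "c*q"] q m[of "real c"] that unfolding x_def F_def by (simp add: mult.commute)
  have S30: "F 30 + 1 \<le> lnfact (30*q) \<and> lnfact (30*q) \<le> F 30 + 1 + (ln 30 + L)"
    using S[of 30] by simp
  have S15: "F 15 + 1 \<le> lnfact (15*q) \<and> lnfact (15*q) \<le> F 15 + 1 + (ln 15 + L)"
    using S[of 15] by simp
  have S10: "F 10 + 1 \<le> lnfact (10*q) \<and> lnfact (10*q) \<le> F 10 + 1 + (ln 10 + L)"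
    using S[of 10] by simp
  have S6: "F 6 + 1 \<le> lnfact (6*q) \<and> lnfact (6*q) \<le> F 6 + 1 + (ln 6 + L)"
    using S[of 6] by simp
  have S1: "F 1 + 1 \<le> lnfact q" "lnfact q \<le> F 1 + 1 + L"
    using lnfact_bounds[of q] q unfolding x_def L_def F_def by simp_all
  have comb: "F 30 - F 15 - F 10 - F 6 + F 1 = 30*cheb_const*x"
    unfolding F_def cheb_const_def e30 e15 e10 e6 by (simp add: algebra_simps)
  have l30: "ln (30*x) = ln 30 + L" using m[of 30] by simp
  have lpos: "ln 6 \<ge> (0::real)" "ln 10 \<ge> (0::real)" "ln 15 \<ge> (0::real)" "L \<ge> 0"
    using x1 unfolding L_def x_def by auto
  have le: "ln 6 \<le> ln (30::real)" "ln 10 \<le> ln (30::real)" "ln 15 \<le> ln (30::real)" by auto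
  show ?thesis unfolding cheb_comb_def x_def[symmetric] l30
    using S30 S15 S10 S6 S1 comb lpos le
    by (intro conjI) (smt (verit))+
qed

lemma psi_mono: "m \<le> n \<Longrightarrow> cheb_psi m \<le> cheb_psi n"
  unfolding cheb_psi_def by (intro sum_mono2) (auto simp: mangoldt_nonneg)

lemma psi_lower:
  assumes n: "n \<ge> 30"
  shows "cheb_psi n \<ge> cheb_const * (real n - 30) - 3 * ln (real n) - 1"
proof -
  define q where "q = n div 30"
  have q1: "q \<ge> 1" using n unfolding q_def by simp
  have qn: "real n - 30 \<le> 30 * real q" "30 * real q \<le> real n" unfolding q_def by linarith+
  have "ln (30*real q) \<le> ln (real n)" using q1 qn(2) by simp
  moreover have "cheb_const * (real n - 30) \<le> cheb_const * (30 * real q)"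
    using cheb_const_bounds qn(1) by (intro mult_left_mono) auto
  ultimately have "cheb_const * (real n - 30) - 3 * ln (real n) - 1
        \<le> 30*cheb_const*real q - 3*ln (30*real q) - 1" by simp
  also have "\<dots> \<le> cheb_psi (30*q)" using cheb_comb_bounds[OF q1] cheb_comb_le_psi[of q] by linarith
  also have "\<dots> \<le> cheb_psi n" unfolding q_def by (intro psi_mono) simp
  finally show ?thesis .
qed

text \<open>Upper Chebyshev bound psi(n) <= 1.11 n + C, by strong induction from the recursion
  psi(30q) <= 30 cheb_const q + 2 log(30q) + psi(5q).\<close>

lemma psi_upper: "\<exists>C. \<forall>n. cheb_psi n \<le> (111/100) * real n + C"
proof -
  have "eventually (\<lambda>q::nat. 2*ln (30*real q) + 30*(111/100) \<le> (9/100) * real q) at_top"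
    by real_asymp
  then obtain q1 where q1: "\<And>q. q \<ge> q1 \<Longrightarrow> 2*ln (30*real q) + 30*(111/100) \<le> (9/100) * real q"
    by (auto simp: eventually_at_top_linorder)
  define q2 where "q2 = max q1 2"
  define C where "C = cheb_psi (30*q2)"
  have step30: "cheb_psi (30*q) \<le> 30*(111/100)*real q + C" for q
  proof (induction q rule: less_induct)
    case (less q)
    show ?case
    proof (cases "q \<le> q2")
      case True
      hence "cheb_psi (30*q) \<le> C" unfolding C_def by (intro psi_mono) simp
      thus ?thesis by simp
    next
      case False
      hence qq: "q \<ge> q1" "q \<ge> 2" unfolding q2_def by auto
      have "cheb_psi (5*q) \<le> cheb_psi (30*(q div 6 + 1))"
        by (intro psi_mono) presburger
      also have "\<dots> \<le> 30*(111/100)*real (q div 6 + 1) + C" using qq by (intro less.IH) linarith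
      also have "\<dots> \<le> 30*(111/100)*(real q / 6 + 1) + C" by (simp add: real_of_nat_div)
      finally have "cheb_psi (5*q) \<le> 30*(111/100)*(real q / 6 + 1) + C" .
      moreover have "cheb_psi (30*q) \<le> 30*cheb_const*real q + 2*ln (30*real q) + cheb_psi (5*q)"
        using cheb_comb_bounds[of q] psi_diff_le_cheb_comb[of q] qq by linarith
      moreover have "30*cheb_const * real q \<le> 30*(9218/10000) * real q"
        using cheb_const_bounds by (intro mult_right_mono) auto
      moreover have "2*ln (30*real q) + 30*(111/100) \<le> (9/100) * real q" using q1 qq by simp
      ultimately show ?thesis by (simp only: distrib_left)
    qed
  qed
  have "cheb_psi n \<le> (111/100) * real n + (C + 30*(111/100))" for n
  proof -
    have "cheb_psi n \<le> cheb_psi (30*(n div 30 + 1))"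
      by (intro psi_mono) presburger
    also have "\<dots> \<le> 30*(111/100)*real (n div 30 + 1) + C" by (rule step30)
    also have "\<dots> \<le> 30*(111/100)*(real n / 30 + 1) + C" by (simp add: real_of_nat_div)
    finally show ?thesis by (simp add: distrib_left)
  qed
  thus ?thesis by blast
qed

text \<open>psi and theta differ only by the contribution of proper prime powers, of which there
  are at most sqrt n log2 n below n.\<close>

lemma psi_minus_theta:
  "cheb_psi n - cheb_theta n = (\<Sum>k\<in>{k\<in>{1..n}. primepow k \<and> \<not> prime k}. mangoldt k)"
proof -
  have "cheb_psi n - cheb_theta n
        = (\<Sum>k=1..n. (if primepow k \<and> \<not> prime k then mangoldt k else 0))"
    unfolding cheb_psi_def cheb_theta_def sum_subtractf[symmetric]
    by (intro sum.cong refl) (auto simp: mangoldt_def)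
  also have "\<dots> = (\<Sum>k\<in>{k\<in>{1..n}. primepow k \<and> \<not> prime k}. mangoldt k)"
    by (rule sum.inter_filter[symmetric]) simp
  finally show ?thesis .
qed

lemma card_proper_prime_powers:
  assumes n: "n \<ge> 1"
  shows "real (card {k\<in>{1..n}. primepow k \<and> \<not> prime k}) \<le> sqrt (real n) * log 2 (real n)"
proof -
  define s where "s = nat \<lfloor>sqrt (real n)\<rfloor>"
  define L where "L = nat \<lfloor>log 2 (real n)\<rfloor>"
  have sub: "{k\<in>{1..n}. primepow k \<and> \<not> prime k} \<subseteq> (\<lambda>(p,m). p ^ m) ` ({1..s} \<times> {1..L})"
  proof
    fix k assume k: "k \<in> {k\<in>{1..n}. primepow k \<and> \<not> prime k}"
    then obtain p m where pm: "prime p" "m > 0" "k = p ^ m" unfolding primepow_def by auto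
    have m2: "m \<ge> 2" using pm k by (cases "m = 1") auto
    have p2: "p \<ge> 2" using pm(1) prime_ge_2_nat by auto
    have kn: "k \<le> n" using k by auto
    have "p^2 \<le> p^m" using m2 p2 by (intro power_increasing) auto
    hence "real p ^ 2 \<le> real n" using kn pm(3) by (metis of_nat_le_iff of_nat_power order_trans)
    hence "p \<le> s" unfolding s_def by (simp add: real_le_rsqrt le_nat_floor)
    moreover have "2^m \<le> p^m" using p2 by (simp add: power_mono)
    hence "(2::real)^m \<le> real n"
      using kn pm(3) by (metis of_nat_le_iff of_nat_power order_trans of_nat_numeral)
    hence "m \<le> L" unfolding L_def using n by (simp add: le_log_iff powr_realpow le_nat_floor)
    ultimately show "k \<in> (\<lambda>(p,m). p ^ m) ` ({1..s} \<times> {1..L})"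
      using pm p2 by (auto intro!: image_eqI[of _ _ "(p,m)"])
  qed
  have "card {k\<in>{1..n}. primepow k \<and> \<not> prime k} \<le> card ((\<lambda>(p,m). p ^ m) ` ({1..s} \<times> {1..L}))"
    by (intro card_mono sub) auto
  also have "\<dots> \<le> s * L" using card_image_le[of "{1..s} \<times> {1..L}"] by simp
  finally have "real (card {k\<in>{1..n}. primepow k \<and> \<not> prime k}) \<le> real s * real L"
    by (metis of_nat_le_iff of_nat_mult)
  also have "\<dots> \<le> sqrt (real n) * log 2 (real n)"
    using n unfolding s_def L_def by (intro mult_mono) auto
  finally show ?thesis .
qed

lemma psi_theta_gap:
  assumes n: "n \<ge> 1"
  shows "cheb_psi n - cheb_theta n \<le> sqrt (real n) * log 2 (real n) * ln (real n)"
proof -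
  have "cheb_psi n - cheb_theta n \<le> (\<Sum>k\<in>{k\<in>{1..n}. primepow k \<and> \<not> prime k}. ln (real n))"
    unfolding psi_minus_theta
  proof (rule sum_mono)
    fix k assume k: "k \<in> {k\<in>{1..n}. primepow k \<and> \<not> prime k}"
    have "mangoldt k \<le> ln (real k)" using k by (intro mangoldt_le) auto
    also have "\<dots> \<le> ln (real n)" using k by auto
    finally show "mangoldt k \<le> ln (real n)" .
  qed
  also have "\<dots> = real (card {k\<in>{1..n}. primepow k \<and> \<not> prime k}) * ln (real n)" by simp
  also have "\<dots> \<le> sqrt (real n) * log 2 (real n) * ln (real n)"
    using n by (intro mult_right_mono card_proper_prime_powers) auto
  finally show ?thesis .
qed

lemma theta_nonneg: "cheb_theta n \<ge> 0"
  unfolding cheb_theta_def by (intro sum_nonneg) auto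

lemma theta_lower: "\<exists>n0. \<forall>n\<ge>n0. cheb_theta n \<ge> (91/100) * real n"
proof -
  have "eventually (\<lambda>n::nat. (921/1000) * (real n - 30) - 3 * ln (real n) - 1
      - sqrt (real n) * log 2 (real n) * ln (real n) \<ge> (91/100) * real n) at_top"
    by real_asymp
  then obtain n1 where n1: "\<And>n. n \<ge> n1 \<Longrightarrow> (921/1000) * (real n - 30) - 3 * ln (real n) - 1
      - sqrt (real n) * log 2 (real n) * ln (real n) \<ge> (91/100) * real n"
    by (auto simp: eventually_at_top_linorder)
  have "cheb_theta n \<ge> (91/100) * real n" if n: "n \<ge> max n1 30" for n
  proof -
    have "cheb_const * (real n - 30) \<ge> (921/1000) * (real n - 30)"
      using cheb_const_bounds n by (intro mult_right_mono) auto
    moreover have "n \<ge> 30" "n \<ge> 1" "n \<ge> n1" using n by auto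
    ultimately show ?thesis using psi_lower[of n] psi_theta_gap[of n] n1[of n] by linarith
  qed
  thus ?thesis by blast
qed

lemma theta_upper: "\<exists>n0. \<forall>n\<ge>n0. cheb_theta n \<le> (112/100) * real n"
proof -
  obtain C where C: "\<And>n. cheb_psi n \<le> (111/100) * real n + C" using psi_upper by blast
  have "eventually (\<lambda>n::nat. (111/100) * real n + C \<le> (112/100) * real n) at_top"
    by real_asymp
  then obtain n1 where n1: "\<And>n. n \<ge> n1 \<Longrightarrow> (111/100) * real n + C \<le> (112/100) * real n"
    by (auto simp: eventually_at_top_linorder)
  have "cheb_theta n \<le> cheb_psi n" for n
  proof -
    have "0 \<le> (\<Sum>k\<in>{k\<in>{1..n}. primepow k \<and> \<not> prime k}. (mangoldt k :: real))"
      by (intro sum_nonneg) (simp add: mangoldt_nonneg)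
    thus ?thesis using psi_minus_theta[of n] by linarith
  qed
  thus ?thesis using C n1 by (meson order_trans)
qed

section \<open>Reciprocal squares of primes in a long window\<close>

text \<open>The sum of log p / p^2 over primes a < p <= X, to be compared with theta by partial
  summation.\<close>

definition log_prime_sq_sum :: "nat \<Rightarrow> nat \<Rightarrow> real" where
  "log_prime_sq_sum a X = (\<Sum>n\<in>{Suc a..X}. if prime n then ln (real n) / (real n)^2 else 0)"

text \<open>One step of partial summation: if theta(X) >= 0.91 X, the increment of the boundary
  term theta(X) (1/X^2 - 1/(X+1)^2) dominates 0.91 (2 - 1/a) (1/X - 1/(X+1)).\<close>

lemma abel_step:
  fixes X a :: nat and t :: real
  assumes a: "a \<ge> 1" "a \<le> X" and t: "t \<ge> (91/100) * real X"
  shows "t * (1/(real X)^2 - 1/(real X + 1)^2)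
         \<ge> (91/100) * (2 - 1/real a) * (1/real X - 1/(real X + 1))"
proof -
  define x where "x = real X"
  have x1: "x \<ge> 1" using a unfolding x_def by simp
  have ax: "1/real a \<ge> 1/(x+1)" using a unfolding x_def by (simp add: frac_le)
  have diff: "1/x^2 - 1/(x+1)^2 = (2 - 1/(x+1)) * (1/x - 1/(x+1)) / x"
    using x1 by (simp add: divide_simps power2_eq_square) (simp add: algebra_simps)
  have pos: "1/x - 1/(x+1) \<ge> 0" using x1 by (simp add: frac_le)
  have nonneg: "(2 - 1/(x+1)) * (1/x - 1/(x+1)) / x \<ge> 0"
    using x1 pos by (intro divide_nonneg_pos mult_nonneg_nonneg) (auto simp: field_simps)
  have "t * (1/x^2 - 1/(x+1)^2) \<ge> (91/100) * x * ((2 - 1/(x+1)) * (1/x - 1/(x+1)) / x)"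
    using t nonneg unfolding diff x_def[symmetric] by (intro mult_right_mono) auto
  also have "(91/100) * x * ((2 - 1/(x+1)) * (1/x - 1/(x+1)) / x)
             = (91/100) * (2 - 1/(x+1)) * (1/x - 1/(x+1))" using x1 by simp
  also have "\<dots> \<ge> (91/100) * (2 - 1/real a) * (1/x - 1/(x+1))"
    using ax pos by (intro mult_right_mono) auto
  finally show ?thesis unfolding x_def .
qed

lemma abel_lower:
  assumes a: "a \<ge> 1" and theta: "\<And>n. n \<ge> a \<Longrightarrow> cheb_theta n \<ge> (91/100) * real n"
    and X: "X \<ge> a"
  shows "log_prime_sq_sum a X \<ge> cheb_theta X / (real X)^2 - cheb_theta a / (real a)^2
           + (91/100) * (2 - 1/real a) * (1/real a - 1/real X)"
  using X
proof (induction X rule: dec_induct)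
  case base
  then show ?case by (simp add: log_prime_sq_sum_def)
next
  case (step X)
  have jump: "(if prime (Suc X) then ln (real (Suc X)) / (real (Suc X))^2 else 0)
              = (cheb_theta (Suc X) - cheb_theta X) / (real X + 1)^2"
    by (simp add: cheb_theta_def add.commute)
  have "log_prime_sq_sum a (Suc X) = log_prime_sq_sum a X
          + (cheb_theta (Suc X) - cheb_theta X) / (real X + 1)^2"
    unfolding log_prime_sq_sum_def jump[symmetric] using step by simp
  moreover have "cheb_theta X / (real X)^2 + (cheb_theta (Suc X) - cheb_theta X) / (real X + 1)^2 =
     cheb_theta (Suc X) / (real (Suc X))^2 + cheb_theta X * (1/(real X)^2 - 1/(real X + 1)^2)"
    by (simp add: field_simps add.commute)
  moreover have "cheb_theta X * (1/(real X)^2 - 1/(real X + 1)^2)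
      \<ge> (91/100) * (2 - 1/real a) * (1/real X - 1/(real X + 1))"
    using step a theta[of X] by (intro abel_step) auto
  moreover have "(91/100) * (2 - 1/real a) * (1/real a - 1/real X)
      + (91/100) * (2 - 1/real a) * (1/real X - 1/(real X + 1))
      = (91/100) * (2 - 1/real a) * (1/real a - 1/real (Suc X))"
    by (simp add: right_diff_distrib)
  ultimately show ?case using step.IH by linarith
qed

lemma prime_window_sum_nat:
  "\<exists>a0. \<forall>a\<ge>a0. (\<Sum>n\<in>{n. prime n \<and> a < n \<and> n \<le> 1000*a}. 1/(real n)^2)
                  \<ge> (65/100)/(real a * ln (real a))"
proof -
  obtain n0 where n0: "\<And>n. n \<ge> n0 \<Longrightarrow> cheb_theta n \<ge> (91/100) * real n"
    using theta_lower by blast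
  obtain n1 where n1: "\<And>n. n \<ge> n1 \<Longrightarrow> cheb_theta n \<le> (112/100) * real n"
    using theta_upper by blast
  have "eventually (\<lambda>a::nat. ((91/100)*(2-1/real a)*(999/1000) - 112/100) / (real a * ln (1000 * real a))
          \<ge> (65/100)/(real a * ln (real a))) at_top"
    by real_asymp
  then obtain a1 where a1: "\<And>a. a \<ge> a1 \<Longrightarrow> (65/100)/(real a * ln (real a))
      \<le> ((91/100)*(2-1/real a)*(999/1000) - 112/100) / (real a * ln (1000 * real a))"
    by (auto simp: eventually_at_top_linorder)
  have "(\<Sum>n\<in>{n. prime n \<and> a < n \<and> n \<le> 1000*a}. 1/(real n)^2) \<ge> (65/100)/(real a * ln (real a))"
    if a: "a \<ge> max (max n0 n1) (max a1 2)" for a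
  proof -
    define X where "X = 1000*a"
    define P where "P = (\<Sum>n\<in>{n. prime n \<and> a < n \<and> n \<le> X}. 1/(real n)^2)"
    define c where "c = (91/100)*(2-1/real a)*(999/1000) - 112/100"
    have a2: "a \<ge> 2" "a \<ge> n0" "a \<ge> n1" "a \<ge> a1" using a by auto
    have "log_prime_sq_sum a X \<ge> cheb_theta X / (real X)^2 - cheb_theta a / (real a)^2
          + (91/100) * (2 - 1/real a) * (1/real a - 1/real X)"
      using a2 n0 unfolding X_def by (intro abel_lower) auto
    moreover have "cheb_theta X / (real X)^2 \<ge> 0" using theta_nonneg by simp
    moreover have "cheb_theta a / (real a)^2 \<le> (112/100) * real a / (real a)^2"
      using n1 a2 by (intro divide_right_mono) auto
    moreover have "(112/100) * real a / (real a)^2 = (112/100) / real a"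
      using a2 by (simp add: power2_eq_square)
    moreover have "1/real a - 1/real X = (999/1000) / real a" unfolding X_def using a2 by simp
    ultimately have "c / real a \<le> log_prime_sq_sum a X"
      unfolding c_def by (simp add: diff_divide_distrib)
    moreover have "log_prime_sq_sum a X \<le> P * ln (real X)"
    proof -
      have "log_prime_sq_sum a X = (\<Sum>n\<in>{n\<in>{Suc a..X}. prime n}. ln (real n) / (real n)^2)"
        unfolding log_prime_sq_sum_def by (rule sum.inter_filter[symmetric]) simp
      also have "\<dots> \<le> (\<Sum>n\<in>{n\<in>{Suc a..X}. prime n}. ln (real X) * (1/(real n)^2))"
        by (intro sum_mono) (auto intro!: divide_right_mono)
      also have "{n\<in>{Suc a..X}. prime n} = {n. prime n \<and> a < n \<and> n \<le> X}" by auto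
      finally show ?thesis unfolding P_def by (simp add: sum_distrib_left mult.commute)
    qed
    ultimately have "c / real a \<le> P * ln (real X)" by (rule order_trans)
    moreover have "ln (real X) > 0" unfolding X_def using a2 by simp
    ultimately have "c / real a / ln (real X) \<le> P" by (subst pos_divide_le_eq) simp_all
    hence "c / (real a * ln (1000 * real a)) \<le> P" unfolding X_def by simp
    thus ?thesis using a1[OF a2(4)] unfolding P_def X_def c_def by linarith
  qed
  thus ?thesis by blast
qed

lemma prime_window_sum:
  "eventually (\<lambda>\<phi>::real. \<exists>P. finite P \<and> (\<forall>p\<in>P. prime p \<and> \<phi> \<le> real p)
       \<and> (59/100) / (\<phi> * ln \<phi>) \<le> (\<Sum>p\<in>P. 1 / (real p)^2)) at_top"
proof -
  obtain a0 where a0: "\<And>a. a \<ge> a0 \<Longrightarrow> (65/100)/(real a * ln (real a))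
      \<le> (\<Sum>n\<in>{n. prime n \<and> a < n \<and> n \<le> 1000*a}. 1/(real n)^2)"
    using prime_window_sum_nat by blast
  have "eventually (\<lambda>x::real. (x+1)*ln(x+1) \<le> (11/10)*(x*ln x)) at_top" by real_asymp
  moreover have "eventually (\<lambda>x::real. x \<ge> max (real a0) 3) at_top" by (rule eventually_ge_at_top)
  ultimately show ?thesis
  proof eventually_elim
    case (elim \<phi>)
    define a where "a = nat \<lceil>\<phi>\<rceil>"
    define P where "P = {n. prime n \<and> a < n \<and> n \<le> 1000*a}"
    have ar: "\<phi> \<le> real a" "real a < \<phi> + 1" "a \<ge> a0"
      using elim(2) unfolding a_def by (auto intro: of_nat_ceiling) linarith+
    have "0 < real a * ln (real a)" using ar elim(2) by simp
    moreover have "real a * ln (real a) \<le> (11/10) * (\<phi> * ln \<phi>)"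
      using ar elim by (intro order_trans[OF mult_mono elim(1)]) auto
    ultimately have "(59/100) / (\<phi> * ln \<phi>) \<le> (65/100)/(real a * ln (real a))"
      by (simp add: field_simps)
    also have "\<dots> \<le> (\<Sum>p\<in>P. 1 / (real p)^2)" unfolding P_def using ar(3) by (rule a0)
    finally have "(59/100) / (\<phi> * ln \<phi>) \<le> (\<Sum>p\<in>P. 1 / (real p)^2)" .
    moreover have "finite P" unfolding P_def by (rule finite_subset[of _ "{..1000*a}"]) auto
    moreover have "\<forall>p\<in>P. prime p \<and> \<phi> \<le> real p" using ar unfolding P_def by auto
    ultimately show ?case by blast
  qed
qed

section \<open>The threshold phi_N\<close>

definition phi_integral :: "nat \<Rightarrow> real \<Rightarrow> real" where
  "phi_integral N \<phi> = integral {\<phi>..2*\<phi>} (\<lambda>x. (real N)^2 / (2 * x^2 * ln x))"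

lemma phi_integrand_continuous:
  "1 < a \<Longrightarrow> continuous_on {a..b} (\<lambda>x. (real N)^2 / (2 * x^2 * ln x))"
  by (intro continuous_intros) auto

lemma phi_integrand_integrable:
  "1 < a \<Longrightarrow> (\<lambda>x. (real N)^2 / (2 * x^2 * ln x)) integrable_on {a..b}"
  by (intro integrable_continuous_interval phi_integrand_continuous)

lemma has_integral_inverse_square:
  fixes a b c :: real assumes "0 < a" "a \<le> b"
  shows "((\<lambda>x. c / x^2) has_integral (c/a - c/b)) {a..b}"
proof -
  have "((\<lambda>x. c / x^2) has_integral ((\<lambda>x. - c / x) b - (\<lambda>x. - c / x) a)) {a..b}"
  proof (rule fundamental_theorem_of_calculus[OF assms(2)])
    fix x assume "x \<in> {a..b}"
    hence "x \<noteq> 0" using assms by auto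
    hence "((\<lambda>x. - c / x) has_real_derivative c / x^2) (at x within {a..b})"
      by (auto intro!: derivative_eq_intros simp: power2_eq_square field_simps)
    thus "((\<lambda>x. - c / x) has_vector_derivative c / x^2) (at x within {a..b})"
      by (simp add: has_real_derivative_iff_has_vector_derivative)
  qed
  thus ?thesis by simp
qed

text \<open>Freezing the logarithm at either endpoint of [phi, 2 phi] gives
  N^2 / (4 phi log (2 phi)) <= phi_integral N phi <= N^2 / (4 phi log phi).\<close>

lemma phi_integral_upper:
  assumes phi: "\<phi> > 1"
  shows "phi_integral N \<phi> \<le> (real N)^2 / (4 * \<phi> * ln \<phi>)"
proof -
  define c where "c = (real N)^2 / (2 * ln \<phi>)"
  have hi: "((\<lambda>x. c / x^2) has_integral (c/\<phi> - c/(2*\<phi>))) {\<phi>..2*\<phi>}"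
    using phi by (intro has_integral_inverse_square) auto
  have "phi_integral N \<phi> \<le> integral {\<phi>..2*\<phi>} (\<lambda>x. c / x^2)"
    unfolding phi_integral_def
  proof (rule integral_le)
    show "(\<lambda>x. c / x^2) integrable_on {\<phi>..2*\<phi>}" using hi by blast
    fix x assume "x \<in> {\<phi>..2*\<phi>}"
    hence "ln \<phi> \<le> ln x" "0 < ln \<phi>" using phi by auto
    hence "((real N)^2 / x^2) / (2 * ln x) \<le> ((real N)^2 / x^2) / (2 * ln \<phi>)"
      by (intro divide_left_mono) auto
    thus "(real N)^2 / (2 * x^2 * ln x) \<le> c / x^2" unfolding c_def by (simp add: field_simps)
  qed (use phi phi_integrand_integrable in auto)
  also have "\<dots> = (real N)^2 / (4 * \<phi> * ln \<phi>)"
    using hi phi unfolding c_def by (simp add: integral_unique field_simps)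
  finally show ?thesis .
qed

lemma phi_integral_lower:
  assumes phi: "\<phi> > 1"
  shows "(real N)^2 / (4 * \<phi> * ln (2*\<phi>)) \<le> phi_integral N \<phi>"
proof -
  define c where "c = (real N)^2 / (2 * ln (2*\<phi>))"
  have hi: "((\<lambda>x. c / x^2) has_integral (c/\<phi> - c/(2*\<phi>))) {\<phi>..2*\<phi>}"
    using phi by (intro has_integral_inverse_square) auto
  have "integral {\<phi>..2*\<phi>} (\<lambda>x. c / x^2) \<le> phi_integral N \<phi>"
    unfolding phi_integral_def
  proof (rule integral_le)
    show "(\<lambda>x. c / x^2) integrable_on {\<phi>..2*\<phi>}" using hi by blast
    fix x assume "x \<in> {\<phi>..2*\<phi>}"
    hence "ln x \<le> ln (2*\<phi>)" "0 < ln x" using phi by auto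
    hence "((real N)^2 / x^2) / (2 * ln (2*\<phi>)) \<le> ((real N)^2 / x^2) / (2 * ln x)"
      by (intro divide_left_mono) auto
    thus "c / x^2 \<le> (real N)^2 / (2 * x^2 * ln x)" unfolding c_def by (simp add: field_simps)
  qed (use phi phi_integrand_integrable in auto)
  moreover have "integral {\<phi>..2*\<phi>} (\<lambda>x. c / x^2) = (real N)^2 / (4 * \<phi> * ln (2*\<phi>))"
    using hi phi unfolding c_def by (simp add: integral_unique field_simps)
  ultimately show ?thesis by simp
qed

definition phi_primitive :: "nat \<Rightarrow> real \<Rightarrow> real" where
  "phi_primitive N y = integral {2..y} (\<lambda>x. (real N)^2 / (2 * x^2 * ln x))"

lemma phi_primitive_deriv:
  assumes "x > 2"
  shows "(phi_primitive N has_real_derivative ((real N)^2 / (2 * x^2 * ln x))) (at x)"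
proof -
  have "((\<lambda>y. integral {2..y} (\<lambda>x. (real N)^2 / (2 * x^2 * ln x)))
          has_real_derivative ((real N)^2 / (2 * x^2 * ln x))) (at x within {2..x+1})"
    using assms by (intro integral_has_real_derivative phi_integrand_continuous) auto
  moreover have "at x within {2..x+1} = at x" using assms by (intro at_within_Icc_at) auto
  ultimately show ?thesis unfolding phi_primitive_def by simp
qed

lemma phi_integral_deriv:
  assumes "\<phi> > 2"
  shows "(phi_integral N has_real_derivative
           (2 * ((real N)^2 / (2 * (2*\<phi>)^2 * ln (2*\<phi>))) - (real N)^2 / (2 * \<phi>^2 * ln \<phi>))) (at \<phi>)"
proof -
  have split: "phi_integral N y = phi_primitive N (2*y) - phi_primitive N y" if "y \<ge> 2" for y
  proof -
    have "integral {2..y} (\<lambda>x. (real N)^2 / (2 * x^2 * ln x))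
          + integral {y..2*y} (\<lambda>x. (real N)^2 / (2 * x^2 * ln x))
          = integral {2..2*y} (\<lambda>x. (real N)^2 / (2 * x^2 * ln x))"
      using that by (intro Henstock_Kurzweil_Integration.integral_combine phi_integrand_integrable) auto
    thus ?thesis unfolding phi_integral_def phi_primitive_def by simp
  qed
  have "((\<lambda>y. phi_primitive N (2*y) - phi_primitive N y) has_real_derivative
        ((real N)^2 / (2 * (2*\<phi>)^2 * ln (2*\<phi>)) * 2 - (real N)^2 / (2 * \<phi>^2 * ln \<phi>))) (at \<phi>)"
    using assms
    by (intro DERIV_diff DERIV_chain2[OF phi_primitive_deriv] phi_primitive_deriv)
       (auto intro!: derivative_eq_intros)
  hence "(phi_integral N has_real_derivative
        ((real N)^2 / (2 * (2*\<phi>)^2 * ln (2*\<phi>)) * 2 - (real N)^2 / (2 * \<phi>^2 * ln \<phi>))) (at \<phi>)"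
    by (rule has_field_derivative_transform_within_open[where S="{2<..}"]) (use assms split in auto)
  thus ?thesis by (simp add: mult.commute)
qed

lemma phi_integral_deriv_neg:
  assumes "\<phi> > 2" "N \<ge> 1"
  shows "2 * ((real N)^2 / (2 * (2*\<phi>)^2 * ln (2*\<phi>))) - (real N)^2 / (2 * \<phi>^2 * ln \<phi>) < 0"
proof -
  have l: "ln \<phi> > 0" "ln (2*\<phi>) > ln \<phi>" using assms by auto
  have "2 * \<phi>^2 * ln \<phi> < 2 * \<phi>^2 * ln (2*\<phi>)"
    using mult_strict_left_mono[OF l(2), of "2 * \<phi>^2"] assms by simp
  also have "\<dots> \<le> 4 * \<phi>^2 * ln (2*\<phi>)" using l by (intro mult_right_mono) auto
  finally have "2 * \<phi>^2 * ln \<phi> < 4 * \<phi>^2 * ln (2*\<phi>)" .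
  hence "(real N)^2 / (4 * \<phi>^2 * ln (2*\<phi>)) < (real N)^2 / (2 * \<phi>^2 * ln \<phi>)"
    by (rule divide_strict_left_mono) (use l assms in auto)
  thus ?thesis by (simp add: power2_eq_square field_simps)
qed

lemma phi_integral_strict_decreasing:
  assumes "2 < \<phi>" "\<phi> < \<phi>'" "N \<ge> 1"
  shows "phi_integral N \<phi>' < phi_integral N \<phi>"
proof (rule DERIV_neg_imp_decreasing[OF assms(2)])
  fix x assume "\<phi> \<le> x" "x \<le> \<phi>'"
  hence x: "x > 2" using assms by simp
  show "\<exists>y. (phi_integral N has_real_derivative y) (at x) \<and> y < 0"
    using phi_integral_deriv[OF x] phi_integral_deriv_neg[OF x assms(3)] by blast
qed

lemma phi_integral_continuous: "2 < a \<Longrightarrow> continuous_on {a..b} (phi_integral N)"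
  by (intro continuous_at_imp_continuous_on ballI DERIV_isCont[OF phi_integral_deriv]) auto

text \<open>Well-definedness of phi_N: when delta lies between the value of phi_integral near 3 and
  its value at N^2 + 3, the intermediate value theorem gives a solution phi > 3, and strict
  monotonicity makes it the unique solution phi > 1.\<close>

lemma phiN_characterization:
  assumes N: "N \<ge> 1"
    and small: "\<delta> < (real N)^2 / (12 * ln 6)"
    and large: "1 / (4 * ln ((real N)^2 + 3)) \<le> \<delta>"
  shows "phiN \<delta> N > 3 \<and> phi_integral N (phiN \<delta> N) = \<delta>"
proof -
  define b where "b = (real N)^2 + 3"
  have b3: "b \<ge> 3" unfolding b_def by simp
  have below_3: "phi_integral N \<phi> > \<delta>" if "1 < \<phi>" "\<phi> \<le> 3" for \<phi>
  proof -
    have "4 * \<phi> * ln (2*\<phi>) \<le> 4 * 3 * ln (2*3)" "4 * \<phi> * ln (2*\<phi>) > 0"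
      using that by (auto intro!: mult_mono)
    hence "(real N)^2 / (12 * ln 6) \<le> (real N)^2 / (4 * \<phi> * ln (2*\<phi>))"
      by (intro divide_left_mono) auto
    thus ?thesis using phi_integral_lower[of \<phi> N] that small by linarith
  qed
  have "phi_integral N b \<le> (real N)^2 / (4 * b * ln b)" using b3 by (intro phi_integral_upper) auto
  also have "\<dots> \<le> b / (4 * b * ln b)" using b3 unfolding b_def by (intro divide_right_mono) auto
  also have "\<dots> = 1 / (4 * ln b)" using b3 by simp
  also have "\<dots> \<le> \<delta>" using large unfolding b_def .
  finally have "phi_integral N b \<le> \<delta>" .
  then obtain \<phi>0 where p0: "\<phi>0 \<ge> 3" "\<phi>0 \<le> b" "phi_integral N \<phi>0 = \<delta>"
    using IVT2'[of "phi_integral N" b \<delta> 3] below_3[of 3] b3 phi_integral_continuous[of 3 b N] by auto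
  have p03: "\<phi>0 > 3" using p0 below_3[of 3] by (cases "\<phi>0 = 3") auto
  have unique: "\<phi> = \<phi>0" if "\<phi> > 1" "phi_integral N \<phi> = \<delta>" for \<phi>
  proof -
    have "\<phi> > 3" using below_3[of \<phi>] that by (cases "\<phi> \<le> 3") auto
    thus ?thesis using phi_integral_strict_decreasing[of \<phi> \<phi>0 N]
        phi_integral_strict_decreasing[of \<phi>0 \<phi> N] p0 p03 N that by (cases \<phi> \<phi>0 rule: linorder_cases) auto
  qed
  have "phiN \<delta> N = \<phi>0" unfolding phiN_def
    using p0 p03 unique unfolding phi_integral_def by (intro the_equality) auto
  thus ?thesis using p0 p03 by simp
qed

lemma phiN_large:
  assumes delta: "\<delta> > 0"
  shows "eventually (\<lambda>N. \<Phi> \<le> phiN \<delta> N \<and> 20 * real N \<le> phiN \<delta> N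
           \<and> \<delta> \<le> (real N)^2 / (4 * (phiN \<delta> N * ln (phiN \<delta> N)))) at_top"
proof -
  define \<Phi>' where "\<Phi>' = \<bar>\<Phi>\<bar> + 1"
  have "\<Phi>' > 0" unfolding \<Phi>'_def by simp
  have "eventually (\<lambda>N::nat. \<delta> < (real N)^2 / (12*ln 6)) at_top" using delta by real_asymp
  moreover have "eventually (\<lambda>N::nat. 1/(4*ln((real N)^2+3)) \<le> \<delta>) at_top" using delta by real_asymp
  moreover have "eventually (\<lambda>N::nat.
      (20*real N + \<Phi>') * ln (2*(20*real N + \<Phi>')) < (real N)^2/(4*\<delta>)) at_top"
    using delta \<open>\<Phi>' > 0\<close> by real_asymp
  moreover have "eventually (\<lambda>N::nat. N \<ge> 1) at_top" by (rule eventually_ge_at_top)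
  ultimately show ?thesis
  proof eventually_elim
    case (elim N)
    define \<phi> where "\<phi> = phiN \<delta> N"
    have ph: "\<phi> > 3" "phi_integral N \<phi> = \<delta>"
      using phiN_characterization[OF elim(4) elim(1) elim(2)] unfolding \<phi>_def by auto
    have "(real N)^2 \<le> \<delta> * (4*\<phi>*ln(2*\<phi>))"
      using phi_integral_lower[of \<phi> N] ph by (simp add: pos_divide_le_eq)
    hence lower: "(real N)^2/(4*\<delta>) \<le> \<phi>*ln(2*\<phi>)"
      using delta by (simp add: pos_divide_le_eq algebra_simps)
    have "\<phi> > 20*real N + \<Phi>'"
    proof (rule ccontr)
      assume "\<not> \<phi> > 20*real N + \<Phi>'"
      hence "\<phi>*ln(2*\<phi>) \<le> (20*real N + \<Phi>')*ln(2*(20*real N + \<Phi>'))"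
        using ph by (intro mult_mono) auto
      thus False using lower elim(3) by linarith
    qed
    moreover have "\<delta> \<le> (real N)^2 / (4 * (\<phi> * ln \<phi>))"
      using phi_integral_upper[of \<phi> N] ph by (simp add: mult.assoc)
    ultimately show ?case using \<open>\<Phi>' > 0\<close> unfolding \<phi>_def \<Phi>'_def by auto
  qed
qed

section \<open>Collisions in the Bernoulli array\<close>

lemma pr_prime: "prime (pr i)"
  unfolding pr_def using enumerate_in_set[OF primes_infinite] by simp

lemma pr_inj: "inj_on pr {i. 1 \<le> i}"
proof (rule inj_onI)
  fix i j assume "i \<in> {i. 1 \<le> i}" "j \<in> {i. 1 \<le> i}" "pr i = pr j"
  hence "enumerate {p::nat. prime p} (i - 1) = enumerate {p. prime p} (j - 1)" "1 \<le> i" "1 \<le> j"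
    unfolding pr_def by auto
  thus "i = j" using strict_mono_enumerate[OF primes_infinite] by (simp add: strict_mono_eq)
qed

lemma pr_surj: "prime p \<Longrightarrow> \<exists>i\<ge>1. pr i = p"
proof -
  assume "prime p"
  then obtain n where "p = enumerate {p::nat. prime p} n"
    using range_enumerate[OF primes_infinite] by auto
  thus ?thesis unfolding pr_def by (intro exI[of _ "Suc n"]) auto
qed

definition index_pairs :: "nat \<Rightarrow> (nat \<times> nat) set" where
  "index_pairs N = {(k,j). 1 \<le> k \<and> k < j \<and> j \<le> N}"

lemma index_pairs_finite: "finite (index_pairs N)"
  by (rule finite_subset[of _ "{1..N} \<times> {1..N}"]) (auto simp: index_pairs_def)

lemma index_pairs_card: "real (card (index_pairs N)) = real N * (real N - 1) / 2"
proof (induction N)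
  case 0
  have "index_pairs 0 = {}" unfolding index_pairs_def by auto
  thus ?case by simp
next
  case (Suc N)
  have "index_pairs (Suc N) = index_pairs N \<union> (\<lambda>k. (k, Suc N)) ` {1..N}"
    unfolding index_pairs_def by (auto simp: le_Suc_eq)
  moreover have "index_pairs N \<inter> (\<lambda>k. (k, Suc N)) ` {1..N} = {}"
    unfolding index_pairs_def by auto
  moreover have "card ((\<lambda>k. (k, Suc N)) ` {1..N}) = N" by (subst card_image) (auto simp: inj_on_def)
  ultimately have "card (index_pairs (Suc N)) = card (index_pairs N) + N"
    using index_pairs_finite by (simp add: card_Un_disjoint)
  thus ?case using Suc by (simp add: field_simps)
qed

lemma prod_two_values:
  assumes "(k,j) \<in> index_pairs N"
  shows "(\<Prod>l\<in>{1..N}. if l = k \<or> l = j then (a::real) else b) = a^2 * b^(N-2)"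
proof -
  have "{1..N} \<inter> {l. l = k \<or> l = j} = {k,j}" "card {k,j} = 2"
    using assms unfolding index_pairs_def by auto
  moreover have "{1..N} \<inter> - {l. l = k \<or> l = j} = {1..N} - {k,j}" by auto
  moreover have "card ({1..N} - {k,j}) = N - 2"
    using assms unfolding index_pairs_def by (subst card_Diff_subset) auto
  ultimately show ?thesis by (subst prod.If_cases) simp_all
qed

text \<open>Probability that a prime row with parameter 1/p has exactly two ones, at a prescribed
  pair of columns, times the number of pairs.\<close>

definition collision_bound :: "nat \<Rightarrow> real \<Rightarrow> real" where
  "collision_bound N p = real N * (real N - 1) / 2 * ((1/p)^2 * (1 - 1/p)^(N-2))"

text \<open>Bernoulli's inequality: for p >= phi the factor (1 - 1/p)^(N-2) is at least 1 - N/phi.\<close>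

lemma collision_bound_lower:
  fixes p \<phi> :: real assumes "\<phi> > 0" "p \<ge> \<phi>" "p \<ge> 1"
  shows "real N * (real N - 1) / 2 * (1 - real N / \<phi>) / p^2 \<le> collision_bound N p"
proof -
  have "1 + real (N-2) * (- 1/p) \<le> (1 + (- 1/p))^(N-2)"
    using assms by (intro Bernoulli_inequality) (simp add: field_simps)
  moreover have "real (N-2) / p \<le> real N / p" using assms by (intro divide_right_mono) auto
  moreover have "real N / p \<le> real N / \<phi>" using assms by (intro divide_left_mono) auto
  ultimately have "1 - real N / \<phi> \<le> (1 - 1/p)^(N-2)" by simp
  moreover have "real N * (real N - 1) / 2 * (1/p)^2 \<ge> 0" by (cases N) auto
  ultimately have "real N * (real N - 1) / 2 * (1/p)^2 * (1 - real N / \<phi>)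
      \<le> real N * (real N - 1) / 2 * (1/p)^2 * (1 - 1/p)^(N-2)"
    by (rule mult_left_mono)
  thus ?thesis unfolding collision_bound_def by (simp add: power_divide field_simps)
qed

lemma no_collision_measurable:
  assumes "\<And>l. l \<in> {1..N} \<Longrightarrow> (i, l) \<in> K"
  shows "{g \<in> space (PiM K (\<lambda>_. borel :: real measure)).
           \<not> (\<exists>kj\<in>index_pairs N. g (i, fst kj) = 1 \<and> g (i, snd kj) = 1)}
         \<in> sets (PiM K (\<lambda>_. borel :: real measure))"
proof -
  let ?S = "space (PiM K (\<lambda>_. borel :: real measure))"
  have coord: "{g \<in> ?S. g (i, l) = 1} \<in> sets (PiM K (\<lambda>_. borel :: real measure))"
    if "l \<in> {1..N}" for l
  proof -
    have "(\<lambda>g. g (i, l)) \<in> measurable (PiM K (\<lambda>_. borel :: real measure)) borel"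
      using that assms by (intro measurable_component_singleton) auto
    from measurable_sets[OF this, of "{1}"] show ?thesis by (simp add: vimage_def Int_def conj_commute)
  qed
  have "{g \<in> ?S. \<not> (\<exists>kj\<in>index_pairs N. g (i, fst kj) = 1 \<and> g (i, snd kj) = 1)}
        = ?S - (\<Union>kj\<in>index_pairs N. {g \<in> ?S. g (i, fst kj) = 1} \<inter> {g \<in> ?S. g (i, snd kj) = 1})"
    by auto
  also have "\<dots> \<in> sets (PiM K (\<lambda>_. borel :: real measure))"
    using index_pairs_finite
    by (intro sets.Diff sets.top sets.finite_UN sets.Int coord) (auto simp: index_pairs_def)
  finally show ?thesis .
qed

locale bernoulli_prime_array = prob_space M for M :: "'a measure" +
  fixes Z :: "nat \<Rightarrow> nat \<Rightarrow> 'a \<Rightarrow> real" and N :: nat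
  assumes rv: "\<And>i k. 1 \<le> i \<Longrightarrow> 1 \<le> k \<Longrightarrow> k \<le> N \<Longrightarrow> Z i k \<in> borel_measurable M"
    and indep: "indep_vars (\<lambda>_. borel) (\<lambda>(i, k). Z i k) {(i, k). 1 \<le> i \<and> 1 \<le> k \<and> k \<le> N}"
    and bern1: "\<And>i k. 1 \<le> i \<Longrightarrow> 1 \<le> k \<Longrightarrow> k \<le> N \<Longrightarrow>
       measure M {\<omega> \<in> space M. Z i k \<omega> = 1} = 1 / real (pr i)"
    and bern0: "\<And>i k. 1 \<le> i \<Longrightarrow> 1 \<le> k \<Longrightarrow> k \<le> N \<Longrightarrow>
       measure M {\<omega> \<in> space M. Z i k \<omega> = 0} = 1 - 1 / real (pr i)"
begin

lemma value_event: "1 \<le> i \<Longrightarrow> 1 \<le> k \<Longrightarrow> k \<le> N \<Longrightarrow> {\<omega> \<in> space M. Z i k \<omega> = c} \<in> events"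
  using measurable_sets[OF rv, of i k "{c}"] by (simp add: vimage_def Int_def conj_commute)

definition exact_pair_event :: "nat \<Rightarrow> nat \<times> nat \<Rightarrow> 'a set" where
  "exact_pair_event i kj = {\<omega> \<in> space M.
     \<forall>l\<in>{1..N}. Z i l \<omega> = (if l = fst kj \<or> l = snd kj then 1 else 0)}"

definition collision_event :: "nat \<Rightarrow> 'a set" where
  "collision_event i = (\<Union>kj\<in>index_pairs N.
     {\<omega> \<in> space M. Z i (fst kj) \<omega> = 1} \<inter> {\<omega> \<in> space M. Z i (snd kj) \<omega> = 1})"

lemma exact_pair_event_in_events:
  assumes "i \<ge> 1" "N \<ge> 1" shows "exact_pair_event i kj \<in> events"
proof -
  have "exact_pair_event i kj = (\<Inter>l\<in>{1..N}.
          {\<omega> \<in> space M. Z i l \<omega> = (if l = fst kj \<or> l = snd kj then 1 else 0)})"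
    unfolding exact_pair_event_def using assms by auto
  also have "\<dots> \<in> events" using assms by (intro sets.finite_INT value_event) auto
  finally show ?thesis .
qed

lemma collision_event_in_events: "i \<ge> 1 \<Longrightarrow> collision_event i \<in> events"
  unfolding collision_event_def using index_pairs_finite
  by (intro sets.finite_UN sets.Int value_event) (auto simp: index_pairs_def)

lemma exact_pair_event_prob:
  assumes i: "i \<ge> 1" and kj: "(k,j) \<in> index_pairs N"
  shows "prob (exact_pair_event i (k,j)) = (1 / real (pr i))^2 * (1 - 1 / real (pr i))^(N-2)"
proof -
  define A where "A = (\<lambda>x::nat\<times>nat. {if snd x = k \<or> snd x = j then 1 else (0::real)})"
  define J where "J = Pair i ` {1..N}"
  have N1: "N \<ge> 1" using kj unfolding index_pairs_def by auto
  have "exact_pair_event i (k,j) = (\<Inter>x\<in>J. (\<lambda>(i, k). Z i k) x -` A x \<inter> space M)"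
    unfolding exact_pair_event_def J_def A_def using N1 by auto
  moreover have "J \<subseteq> {(i, k). 1 \<le> i \<and> 1 \<le> k \<and> k \<le> N}" "J \<noteq> {}" "finite J"
    unfolding J_def using i N1 by auto
  ultimately have "prob (exact_pair_event i (k,j))
      = (\<Prod>x\<in>J. prob ((\<lambda>(i, k). Z i k) x -` A x \<inter> space M))"
    using indep_varsD[OF indep, of J A] unfolding A_def by auto
  also have "\<dots> = (\<Prod>l\<in>{1..N}. prob ({\<omega> \<in> space M. Z i l \<omega> = (if l = k \<or> l = j then 1 else 0)}))"
    unfolding J_def A_def by (subst prod.reindex) (auto simp: inj_on_def vimage_def Int_def conj_commute)
  also have "\<dots> = (\<Prod>l\<in>{1..N}. if l = k \<or> l = j then 1 / real (pr i) else 1 - 1 / real (pr i))"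
    using bern1 bern0 i by (intro prod.cong refl) auto
  also have "\<dots> = (1 / real (pr i))^2 * (1 - 1 / real (pr i))^(N-2)"
    using kj by (rule prod_two_values)
  finally show ?thesis .
qed

text \<open>The exact-pair events for distinct pairs are disjoint subevents of the collision event,
  whence P[collision in row i] >= collision_bound N (pr i).\<close>

lemma exact_pair_events_disjoint: "disjoint_family_on (exact_pair_event i) (index_pairs N)"
  unfolding disjoint_family_on_def
proof (intro ballI impI)
  fix kj kj' assume a: "kj \<in> index_pairs N" "kj' \<in> index_pairs N" "kj \<noteq> kj'"
  obtain k j k' j' where e: "kj = (k,j)" "kj' = (k',j')" by (cases kj, cases kj')
  have r: "1 \<le> k" "k < j" "j \<le> N" "1 \<le> k'" "k' < j'" "j' \<le> N"
    using a e unfolding index_pairs_def by auto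
  show "exact_pair_event i kj \<inter> exact_pair_event i kj' = {}"
  proof (rule ccontr)
    assume "exact_pair_event i kj \<inter> exact_pair_event i kj' \<noteq> {}"
    then obtain \<omega> where
      w1: "\<forall>l\<in>{1..N}. Z i l \<omega> = (if l = k \<or> l = j then 1 else 0)" and
      w2: "\<forall>l\<in>{1..N}. Z i l \<omega> = (if l = k' \<or> l = j' then 1 else 0)"
      using e unfolding exact_pair_event_def by auto
    have same: "(l = k \<or> l = j) \<longleftrightarrow> (l = k' \<or> l = j')" if "l \<in> {1..N}" for l
      using w1[rule_format, OF that] w2[rule_format, OF that] by (auto split: if_splits)
    have "k = k' \<or> k = j'" "j = k' \<or> j = j'" "k' = k \<or> k' = j" "j' = k \<or> j' = j"
      using same[of k] same[of j] same[of k'] same[of j'] r by auto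
    hence "k = k' \<and> j = j'" using r by auto
    thus False using a e by auto
  qed
qed

lemma collision_event_prob:
  assumes i: "i \<ge> 1" and N1: "N \<ge> 1"
  shows "collision_bound N (real (pr i)) \<le> prob (collision_event i)"
proof -
  have "collision_bound N (real (pr i)) = (\<Sum>kj\<in>index_pairs N. prob (exact_pair_event i kj))"
    using exact_pair_event_prob[OF i] index_pairs_card[of N]
    by (simp add: collision_bound_def split_paired_all)
  also have "\<dots> = prob (\<Union>kj\<in>index_pairs N. exact_pair_event i kj)"
    using index_pairs_finite exact_pair_events_disjoint exact_pair_event_in_events[OF i N1]
    by (intro finite_measure_finite_Union[symmetric]) auto
  also have "\<dots> \<le> prob (collision_event i)"
    using collision_event_in_events[OF i]
    by (intro finite_measure_mono) (force simp: exact_pair_event_def collision_event_def index_pairs_def)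
  finally show ?thesis .
qed

text \<open>The no-collision events of different rows are independent, because they are
  determined by disjoint blocks of the independent family.\<close>

lemma no_collision_indep:
  assumes I: "\<And>i. i \<in> I \<Longrightarrow> i \<ge> 1"
  shows "indep_events (\<lambda>i. space M - collision_event i) I"
proof -
  define K where "K = (\<lambda>i::nat. Pair i ` {1..N})"
  define X where "X = (\<lambda>i \<omega>. restrict (\<lambda>x. (\<lambda>(i, k). Z i k) x \<omega>) (K i))"
  define nc where "nc = (\<lambda>i (g :: nat \<times> nat \<Rightarrow> real).
                      \<not> (\<exists>kj\<in>index_pairs N. g (i, fst kj) = 1 \<and> g (i, snd kj) = 1))"
  have "indep_vars (\<lambda>i. PiM (K i) (\<lambda>_. borel :: real measure)) X I"
    unfolding X_def using I
    by (intro indep_vars_restrict[OF indep]) (auto simp: K_def disjoint_family_on_def)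
  hence "indep_events (\<lambda>i. {\<omega> \<in> space M. nc i (X i \<omega>)}) I"
  proof (rule indep_eventsI_indep_vars)
    fix i
    show "{g \<in> space (PiM (K i) (\<lambda>_. borel :: real measure)). nc i g}
          \<in> sets (PiM (K i) (\<lambda>_. borel :: real measure))"
      unfolding nc_def by (rule no_collision_measurable) (simp add: K_def)
  qed
  moreover have "{\<omega> \<in> space M. nc i (X i \<omega>)} = space M - collision_event i" for i
  proof -
    have "(i, fst kj) \<in> K i" "(i, snd kj) \<in> K i" if "kj \<in> index_pairs N" for kj
      using that unfolding K_def index_pairs_def by auto
    hence "nc i (X i \<omega>) \<longleftrightarrow> \<not> (\<exists>kj\<in>index_pairs N. Z i (fst kj) \<omega> = 1 \<and> Z i (snd kj) \<omega> = 1)"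
      for \<omega> unfolding nc_def X_def by auto
    thus ?thesis unfolding collision_event_def by auto
  qed
  ultimately show ?thesis by simp
qed

lemma Delta_measurable: "DeltaN' N Z \<in> borel_measurable M"
  unfolding DeltaN'_def
proof (rule borel_measurable_SUP)
  show "countable {(k, j, i::nat). 1 \<le> k \<and> k < j \<and> j \<le> N \<and> 1 \<le> i}"
    by (rule countable_subset[OF subset_UNIV]) (rule countableI_type)
qed (auto intro!: borel_measurable_ereal borel_measurable_times rv)

lemma Delta_event: "{\<omega> \<in> space M. ereal c \<le> DeltaN' N Z \<omega>} \<in> events"
  using measurable_sets[OF Delta_measurable, of "{ereal c..}"] by (simp add: vimage_def Int_def conj_commute)

lemma collision_imp_Delta:
  assumes i: "i \<ge> 1" and phi: "\<phi> > 0" "real (pr i) \<ge> \<phi>"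
  shows "collision_event i \<subseteq> {\<omega> \<in> space M. ereal (ln \<phi>) \<le> DeltaN' N Z \<omega>}"
proof
  fix \<omega> assume "\<omega> \<in> collision_event i"
  then obtain k j where kj: "(k,j) \<in> index_pairs N" "Z i k \<omega> = 1" "Z i j \<omega> = 1" "\<omega> \<in> space M"
    unfolding collision_event_def by auto
  have mem: "(k, j, i) \<in> {(k, j, i). 1 \<le> k \<and> k < j \<and> j \<le> N \<and> 1 \<le> i}"
    using kj(1) i unfolding index_pairs_def by auto
  have "ereal (ln \<phi>) \<le> (case (k, j, i) of (k, j, i) \<Rightarrow> ereal (Z i j \<omega> * Z i k \<omega> * ln (real (pr i))))"
    using phi kj by simp
  hence "ereal (ln \<phi>) \<le> DeltaN' N Z \<omega>" unfolding DeltaN'_def by (rule SUP_upper2[OF mem])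
  thus "\<omega> \<in> {\<omega> \<in> space M. ereal (ln \<phi>) \<le> DeltaN' N Z \<omega>}" using kj by simp
qed

text \<open>Main probabilistic estimate: for a finite set I of rows with primes at least phi,
  P[Delta'_N >= log phi] >= 1 - prod_i (1 - P[collision in row i]) >= 1 - exp(- sum_i bound_i).\<close>

lemma Delta_prob_rows:
  assumes I: "finite I" "\<And>i. i \<in> I \<Longrightarrow> i \<ge> 1"
    and phi: "\<phi> > 0" "\<And>i. i \<in> I \<Longrightarrow> real (pr i) \<ge> \<phi>" and N1: "N \<ge> 1"
  shows "1 - exp (- (\<Sum>i\<in>I. collision_bound N (real (pr i))))
         \<le> prob {\<omega> \<in> space M. ereal (ln \<phi>) \<le> DeltaN' N Z \<omega>}"
proof (cases "I = {}")
  case True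
  thus ?thesis by simp
next
  case False
  let ?E = "{\<omega> \<in> space M. ereal (ln \<phi>) \<le> DeltaN' N Z \<omega>}"
  have "(\<Union>i\<in>I. collision_event i) \<in> events"
    using I by (intro sets.finite_UN collision_event_in_events) auto
  moreover have "space M - (\<Union>i\<in>I. collision_event i) = (\<Inter>i\<in>I. space M - collision_event i)"
    using False by auto
  ultimately have "1 - prob (\<Union>i\<in>I. collision_event i) = prob (\<Inter>i\<in>I. space M - collision_event i)"
    using prob_compl by metis
  also have "\<dots> = (\<Prod>i\<in>I. prob (space M - collision_event i))"
    using no_collision_indep[of I] I False unfolding indep_events_def by auto
  also have "\<dots> \<le> (\<Prod>i\<in>I. exp (- collision_bound N (real (pr i))))"
  proof (rule prod_mono)
    fix i assume i: "i \<in> I"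
    have "prob (space M - collision_event i) = 1 - prob (collision_event i)"
      using collision_event_in_events I(2)[OF i] by (simp add: prob_compl)
    also have "\<dots> \<le> 1 - collision_bound N (real (pr i))"
      using collision_event_prob I(2)[OF i] N1 by simp
    also have "\<dots> \<le> exp (- collision_bound N (real (pr i)))"
      using exp_ge_add_one_self[of "- collision_bound N (real (pr i))"] by simp
    finally show "0 \<le> prob (space M - collision_event i)
        \<and> prob (space M - collision_event i) \<le> exp (- collision_bound N (real (pr i)))" by simp
  qed
  also have "\<dots> = exp (- (\<Sum>i\<in>I. collision_bound N (real (pr i))))"
    using exp_sum[OF I(1), of "\<lambda>i. - collision_bound N (real (pr i))"] by (simp add: sum_negf)
  finally have "1 - exp (- (\<Sum>i\<in>I. collision_bound N (real (pr i))))
      \<le> prob (\<Union>i\<in>I. collision_event i)" by simp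
  also have "\<dots> \<le> prob ?E"
    using collision_imp_Delta I phi by (intro finite_measure_mono Delta_event) auto
  finally show ?thesis .
qed

lemma Delta_prob_primes:
  assumes P: "finite P" "\<And>p. p \<in> P \<Longrightarrow> prime p \<and> \<phi> \<le> real p"
    and phi: "\<phi> > 0" and N1: "N \<ge> 1"
  shows "1 - exp (- (real N * (real N - 1) / 2 * (1 - real N / \<phi>) * (\<Sum>p\<in>P. 1 / (real p)^2)))
         \<le> prob {\<omega> \<in> space M. ereal (ln \<phi>) \<le> DeltaN' N Z \<omega>}"
proof -
  define I where "I = {i. 1 \<le> i \<and> pr i \<in> P}"
  have img: "pr ` I = P"
  proof
    show "P \<subseteq> pr ` I"
    proof
      fix p assume "p \<in> P"
      then obtain i where "i \<ge> 1" "pr i = p" using P(2) pr_surj by blast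
      thus "p \<in> pr ` I" using \<open>p \<in> P\<close> unfolding I_def by blast
    qed
  qed (auto simp: I_def)
  have inj: "inj_on pr I" by (rule inj_on_subset[OF pr_inj]) (auto simp: I_def)
  have "finite I" using finite_imageD[OF _ inj] img P(1) by simp
  have "real N * (real N - 1) / 2 * (1 - real N / \<phi>) * (\<Sum>p\<in>P. 1 / (real p)^2)
        = (\<Sum>i\<in>I. real N * (real N - 1) / 2 * (1 - real N / \<phi>) / (real (pr i))^2)"
    unfolding img[symmetric] using inj by (simp add: sum.reindex sum_distrib_left)
  also have "\<dots> \<le> (\<Sum>i\<in>I. collision_bound N (real (pr i)))"
  proof (rule sum_mono)
    fix i assume "i \<in> I"
    hence "\<phi> \<le> real (pr i)" using P(2) unfolding I_def by blast
    moreover have "1 \<le> real (pr i)" using prime_ge_1_nat[OF pr_prime[of i]] by simp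
    ultimately show "real N * (real N - 1) / 2 * (1 - real N / \<phi>) / (real (pr i))^2
        \<le> collision_bound N (real (pr i))" using phi by (intro collision_bound_lower)
  qed
  finally have "1 - exp (- (real N * (real N - 1) / 2 * (1 - real N / \<phi>) * (\<Sum>p\<in>P. 1 / (real p)^2)))
      \<le> 1 - exp (- (\<Sum>i\<in>I. collision_bound N (real (pr i))))" by simp
  also have "\<dots> \<le> prob {\<omega> \<in> space M. ereal (ln \<phi>) \<le> DeltaN' N Z \<omega>}"
    using \<open>finite I\<close> P(2) phi N1 by (intro Delta_prob_rows) (auto simp: I_def)
  finally show ?thesis .
qed

end


lemma exponent_exceeds_delta:
  fixes N :: nat and \<phi> Q \<delta> :: real
  assumes N: "N \<ge> 20" and phi: "20 * real N \<le> \<phi>" "\<phi> > 1"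
    and Q: "(59/100) / (\<phi> * ln \<phi>) \<le> Q"
    and delta: "\<delta> \<le> (real N)^2 / (4 * (\<phi> * ln \<phi>))"
  shows "\<delta> \<le> real N * (real N - 1) / 2 * (1 - real N / \<phi>) * Q"
proof -
  define L where "L = \<phi> * ln \<phi>"
  have L: "L > 0" unfolding L_def using phi by simp
  have Nr: "real N \<ge> 20" using N by simp
  have "real N / \<phi> \<le> 1/20" using phi Nr by (simp add: divide_le_eq)
  moreover have "real N * 20 \<le> real N * real N" using Nr by (intro mult_left_mono) auto
  hence "(19/40) * (real N)^2 \<le> real N * (real N - 1) / 2" by (simp add: power2_eq_square algebra_simps)
  ultimately have pairs: "(19/40) * (real N)^2 * (19/20) \<le> real N * (real N - 1) / 2 * (1 - real N / \<phi>)"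
    using Nr by (intro mult_mono) auto
  have "(real N)^2 / (4 * L) \<le> ((19/40) * (real N)^2 * (19/20)) * ((59/100) / L)"
    using L by (simp add: field_simps)
  also have "\<dots> \<le> real N * (real N - 1) / 2 * (1 - real N / \<phi>) * Q"
    using L by (intro mult_mono[OF pairs Q[folded L_def]] order_trans[OF _ pairs]) auto
  finally show ?thesis using delta unfolding L_def by linarith
qed

text \<open>For every large N: phi = phi_N is large, the window of primes above phi carries
  reciprocal-square mass 0.59 / (phi log phi), and the probabilistic estimate applies with an
  exponent at least delta.\<close>

theorem proposition3p2:
  fixes M :: "nat \<Rightarrow> 'a measure"
    and Z :: "nat \<Rightarrow> nat \<Rightarrow> nat \<Rightarrow> 'a \<Rightarrow> real"
    and \<delta> :: real
  assumes delta_pos: "\<delta> > 0"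
    and prob: "\<And>N. prob_space (M N)"
    and rv: "\<And>N i k. 1 \<le> i \<Longrightarrow> 1 \<le> k \<Longrightarrow> k \<le> N \<Longrightarrow> Z N i k \<in> borel_measurable (M N)"
    and indep: "\<And>N. prob_space.indep_vars (M N) (\<lambda>_. borel) (\<lambda>(i, k). Z N i k)
                    {(i, k). 1 \<le> i \<and> 1 \<le> k \<and> k \<le> N}"
    and bern1: "\<And>N i k. 1 \<le> i \<Longrightarrow> 1 \<le> k \<Longrightarrow> k \<le> N \<Longrightarrow>
       measure (M N) {\<omega> \<in> space (M N). Z N i k \<omega> = 1} = 1 / real (pr i)"
    and bern0: "\<And>N i k. 1 \<le> i \<Longrightarrow> 1 \<le> k \<Longrightarrow> k \<le> N \<Longrightarrow>
       measure (M N) {\<omega> \<in> space (M N). Z N i k \<omega> = 0} = 1 - 1 / real (pr i)"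
  shows "liminf (\<lambda>N. ereal (measure (M N)
            {\<omega> \<in> space (M N). DeltaN' N (Z N) \<omega> \<ge> ereal (ln (phiN \<delta> N))}))
         \<ge> ereal (1 - exp (- \<delta>))"
proof -
  obtain \<Phi> where window: "\<And>\<phi>. \<Phi> \<le> \<phi> \<Longrightarrow> \<exists>P. finite P \<and> (\<forall>p\<in>P. prime p \<and> \<phi> \<le> real p)
      \<and> (59/100) / (\<phi> * ln \<phi>) \<le> (\<Sum>p\<in>P. 1 / (real p)^2)"
    using prime_window_sum by (auto simp: eventually_at_top_linorder)
  have "eventually (\<lambda>N. ereal (1 - exp (- \<delta>)) \<le> ereal (measure (M N)
          {\<omega> \<in> space (M N). DeltaN' N (Z N) \<omega> \<ge> ereal (ln (phiN \<delta> N))})) at_top"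
    using phiN_large[OF delta_pos, of "max \<Phi> 2"] eventually_ge_at_top[of "20::nat"]
  proof eventually_elim
    case (elim N)
    define \<phi> where "\<phi> = phiN \<delta> N"
    interpret bernoulli_prime_array "M N" "Z N" N
      using prob rv indep bern1 bern0
      by (simp add: bernoulli_prime_array_def bernoulli_prime_array_axioms_def)
    have \<phi>: "\<Phi> \<le> \<phi>" "1 < \<phi>" "20 * real N \<le> \<phi>" "\<delta> \<le> (real N)^2 / (4 * (\<phi> * ln \<phi>))"
      using elim(1) unfolding \<phi>_def by auto
    obtain P where P: "finite P" "\<And>p. p \<in> P \<Longrightarrow> prime p \<and> \<phi> \<le> real p"
        "(59/100) / (\<phi> * ln \<phi>) \<le> (\<Sum>p\<in>P. 1 / (real p)^2)"
      using window[OF \<phi>(1)] by blast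
    have "1 - exp (- \<delta>)
        \<le> 1 - exp (- (real N * (real N - 1) / 2 * (1 - real N / \<phi>) * (\<Sum>p\<in>P. 1 / (real p)^2)))"
      using exponent_exceeds_delta[OF elim(2) \<phi>(3,2) P(3) \<phi>(4)] by simp
    also have "\<dots> \<le> prob {\<omega> \<in> space (M N). ereal (ln \<phi>) \<le> DeltaN' N (Z N) \<omega>}"
      using P \<phi> elim(2) by (intro Delta_prob_primes) auto
    finally show ?case unfolding \<phi>_def by simp
  qed
  thus ?thesis by (rule Liminf_bounded)
qed

end
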